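(* Let $F(t)\in\mathbb{Z}[t]$ be squarefree and let $D(t)\in\mathbb{Z}[t]$. Suppose that for all but finitely many integers $n$, the squarefree part of $F(n)$ divides $D(n)$. Then $F(t)$ divides $D(t)$ in $\mathbb{Q}[t]$.
   Context: A polynomial $F(t)\in\mathbb{Z}[t]$ is called squarefree if whenever $F(t)=g(t)^2h(t)$ with $g,h\in\mathbb{Z}[t]$, then $g=\pm1$. The squarefree part of a nonzero integer $m$ is the unique squarefree integer $s$ with $m/s$ a perfect square. *)

theory Defs
  imports "HOL-Computational_Algebra.Computational_Algebra"
begin

definition sqfree_int_poly :: "int poly \<Rightarrow> bool" where
  "sqfree_int_poly F \<longleftrightarrow> (\<forall>g h. F = g ^ 2 * h \<longrightarrow> g = 1 \<or> g = -1)"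

text \<open>Squarefree part of a nonzero integer m: the unique squarefree integer s with
  m / s a perfect square (only meaningful for m \<noteq> 0).\<close>
definition sqf_part :: "int \<Rightarrow> int" where
  "sqf_part m = (THE s. squarefree s \<and> (\<exists>k::int. m = s * k ^ 2))"

end

theory Submission
  imports Defs "HOL-Computational_Algebra.Field_as_Ring"
begin

text \<open>If \<open>F\<close> does not divide \<open>D\<close> over \<open>\<rat>\<close>, then, because \<open>F\<close> is squarefree over \<open>\<rat>\<close>
  by Gauss's lemma, some prime \<open>f\<close> divides \<open>F\<close> exactly once and does not divide \<open>D\<close>. After
  clearing denominators, \<open>f\<close> is coprime to \<open>F/f\<close>, to \<open>D\<close> and to \<open>f'\<close>, so a prime dividing
  a value of \<open>f\<close> and a value of one of these divides a fixed nonzero integer. By Schur's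
  theorem some prime \<open>p\<close> avoiding these integers divides a value \<open>f(n)\<close>; as \<open>p \<nmid> f'(n)\<close>,
  a Taylor step gives \<open>n\<^sub>1\<close> with \<open>p\<close> dividing \<open>f(n\<^sub>1)\<close> exactly once. Then for every
  \<open>n \<equiv> n\<^sub>1 (mod p\<^sup>2)\<close> the prime \<open>p\<close> divides \<open>F(n)\<close> exactly once, hence divides its
  squarefree part, but does not divide \<open>D(n)\<close>.\<close>

abbreviation rat_poly :: "int poly \<Rightarrow> rat poly" where
  "rat_poly \<equiv> map_poly of_int"

lemma map_poly_of_int_add:
  "(map_poly of_int (p + q) :: 'a::comm_ring_1 poly) = map_poly of_int p + map_poly of_int q"
  by (intro poly_eqI) (simp add: coeff_map_poly)

lemma map_poly_of_int_smult:
  "(map_poly of_int (smult c p) :: 'a::comm_ring_1 poly) = smult (of_int c) (map_poly of_int p)"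
  by (rule map_poly_smult) simp_all

lemma map_poly_of_int_mult:
  "(map_poly of_int (p * q) :: 'a::comm_ring_1 poly) = map_poly of_int p * map_poly of_int q"
  by (induction p) (simp_all add: map_poly_pCons map_poly_of_int_add map_poly_of_int_smult)

lemma map_poly_of_int_power:
  "(map_poly of_int (p ^ n) :: 'a::comm_ring_1 poly) = map_poly of_int p ^ n"
  by (induction n) (simp_all add: map_poly_of_int_mult)

lemma map_poly_of_int_pderiv:
  "(map_poly of_int (pderiv p) :: 'a::idom poly) = pderiv (map_poly of_int p)"
  by (induction p) (simp_all add: map_poly_pCons pderiv_pCons map_poly_of_int_add)

lemma map_poly_of_int_eq_iff:
  "(map_poly of_int p :: 'a::ring_char_0 poly) = map_poly of_int q \<longleftrightarrow> p = q"
  by (metis (no_types, lifting) coeff_map_poly of_int_0 of_int_eq_iff poly_eqI)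

lemma degree_map_poly_of_int [simp]:
  "degree (map_poly of_int p :: 'a::ring_char_0 poly) = degree p"
  by (simp add: degree_map_poly)

lemma rat_poly_clear_denominators:
  fixes u :: "rat poly"
  obtains c U where "c > 0" "rat_poly U = smult (of_int c) u"
proof (induction u arbitrary: thesis)
  case 0
  show ?case by (rule 0[of 1 0]) simp_all
next
  case (pCons a u)
  obtain c U where c: "c > 0" "rat_poly U = smult (of_int c) u"
    using pCons.IH by blast
  obtain n d where nd: "quotient_of a = (n, d)" by (cases "quotient_of a")
  have d: "d > 0" using nd quotient_of_denom_pos by blast
  have a: "a = of_int n / of_int d" using nd quotient_of_div by blast
  have "rat_poly (pCons (n * c) (smult d U)) = smult (of_int (c * d)) (pCons a u)"
    using c d by (simp add: map_poly_pCons map_poly_of_int_smult a mult.commute)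
  with c d show ?case by (intro pCons.prems[of "c * d"]) simp_all
qed

lemma coprime_rat_poly_values:
  fixes A B :: "int poly"
  assumes "coprime (rat_poly A) (rat_poly B)"
  obtains N :: int where "N \<noteq> 0" "\<And>m n. m dvd poly A n \<Longrightarrow> m dvd poly B n \<Longrightarrow> m dvd N"
proof -
  obtain u v where "u * rat_poly A + v * rat_poly B = 1"
    using assms bezout_coefficients_fst_snd[of "rat_poly A" "rat_poly B"] by auto
  moreover obtain c U where c: "c > 0" "rat_poly U = smult (of_int c) u"
    by (rule rat_poly_clear_denominators)
  moreover obtain d V where d: "d > 0" "rat_poly V = smult (of_int d) v"
    by (rule rat_poly_clear_denominators)
  ultimately have "rat_poly (smult d U * A + smult c V * B) = rat_poly [:c * d:]"
    by (simp add: map_poly_of_int_add map_poly_of_int_mult map_poly_of_int_smult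
        map_poly_pCons smult_add_right[symmetric] mult.commute)
  then have bezout: "smult d U * A + smult c V * B = [:c * d:]"
    by (simp only: map_poly_of_int_eq_iff)
  show thesis
  proof
    show "c * d \<noteq> 0" using c d by simp
  next
    fix m n assume "m dvd poly A n" "m dvd poly B n"
    then have "m dvd poly (smult d U * A + smult c V * B) n" by simp
    then show "m dvd c * d" by (simp only: bezout) simp
  qed
qed

lemma coprime_smult_left_iff:
  fixes p q :: "'a::field poly"
  assumes "a \<noteq> 0"
  shows "coprime (smult a p) q \<longleftrightarrow> coprime p q"
  using assms by (simp add: coprime_def dvd_smult_iff)

lemma coprime_smult_right_iff:
  fixes p q :: "'a::field poly"
  assumes "a \<noteq> 0"
  shows "coprime p (smult a q) \<longleftrightarrow> coprime p q"
  using assms by (simp add: coprime_def dvd_smult_iff)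

lemma rat_poly_primitive_multiple:
  fixes f :: "rat poly"
  assumes "f \<noteq> 0"
  obtains g a where "content g = 1" "a \<noteq> 0" "rat_poly g = smult a f"
proof -
  obtain c G where c: "c > 0" "rat_poly G = smult (of_int c) f"
    by (rule rat_poly_clear_denominators)
  have "G \<noteq> 0" using c assms by auto
  define k where "k = content G"
  have k: "k \<noteq> 0" using \<open>G \<noteq> 0\<close> by (simp add: k_def)
  have "rat_poly (primitive_part G)
      = smult (inverse (of_int k)) (rat_poly (smult k (primitive_part G)))"
    using k by (simp add: map_poly_of_int_smult)
  also have "\<dots> = smult (of_int c / of_int k) f"
    by (simp add: k_def c(2) divide_inverse mult.commute)
  finally have "rat_poly (primitive_part G) = smult (of_int c / of_int k) f" .
  with \<open>G \<noteq> 0\<close> c k show thesis by (intro that[of "primitive_part G"]) simp_all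
qed

text \<open>Gauss's lemma: a square factor over \<open>\<rat>\<close> yields, after rescaling to a primitive
  polynomial, a square factor over \<open>\<int>\<close>.\<close>

lemma sqfree_int_poly_no_square_factor:
  fixes F :: "int poly" and f :: "rat poly"
  assumes sqfree: "sqfree_int_poly F" and deg: "degree f > 0"
  shows "\<not> f ^ 2 dvd rat_poly F"
proof
  assume "f ^ 2 dvd rat_poly F"
  have "f \<noteq> 0" using deg by auto
  then obtain g a where g: "content g = 1" "a \<noteq> 0" "rat_poly g = smult a f"
    by (rule rat_poly_primitive_multiple)
  have "rat_poly (g ^ 2) = smult (a ^ 2) (f ^ 2)"
    by (simp add: map_poly_of_int_power g(3) smult_power)
  with \<open>f ^ 2 dvd rat_poly F\<close> g(2) have "rat_poly (g ^ 2) dvd rat_poly F"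
    by (simp add: smult_dvd_iff)
  then obtain h where h: "rat_poly F = rat_poly (g ^ 2) * h" by (elim dvdE)
  obtain d H where dH: "d > 0" "rat_poly H = smult (of_int d) h"
    by (rule rat_poly_clear_denominators)
  have "rat_poly (g ^ 2 * H) = smult (of_int d) (rat_poly (g ^ 2) * h)"
    by (simp only: map_poly_of_int_mult dH mult_smult_right)
  also have "\<dots> = rat_poly (smult d F)"
    by (simp only: h map_poly_of_int_smult)
  finally have e: "g ^ 2 * H = smult d F" by (simp only: map_poly_of_int_eq_iff)
  have "content H = content (g ^ 2 * H)"
    using g(1) by (simp add: content_mult power2_eq_square)
  also have "\<dots> = d * content F"
    using e dH(1) by simp
  finally have "[:d:] dvd H" by (simp add: const_poly_dvd_iff_dvd_content)
  then obtain H' where H': "H = [:d:] * H'" by (elim dvdE)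
  have "smult d (g ^ 2 * H') = g ^ 2 * H" by (simp add: H')
  also note e
  finally have "g ^ 2 * H' = F" by (rule smult_cancel[rotated]) (use dH(1) in simp)
  with sqfree have "g = 1 \<or> g = -1" unfolding sqfree_int_poly_def by metis
  then have "degree (rat_poly g) = 0" by auto
  with g deg show False by simp
qed

lemma prime_factor_not_dvd:
  fixes a b :: "'a::factorial_semiring_gcd"
  assumes "a \<noteq> 0" "\<not> a dvd b" "\<And>p. prime p \<Longrightarrow> \<not> p ^ 2 dvd a"
  obtains p where "prime p" "p dvd a" "\<not> p dvd b"
proof -
  obtain h where h: "a = gcd a b * h" using gcd_dvd1 by (blast elim: dvdE)
  have "\<not> is_unit h"
  proof
    assume "is_unit h"
    then have "a dvd gcd a b"
      using dvd_mult_unit_iff[of h a "gcd a b"] by (simp flip: h)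
    with assms(2) show False by (meson dvd_trans gcd_dvd2)
  qed
  moreover have "h \<noteq> 0" using h assms(1) by auto
  ultimately obtain p where p: "prime p" "p dvd h" using prime_divisor_exists by blast
  have "p dvd a" using p(2) h by (metis dvd_mult)
  moreover have "\<not> p dvd b"
  proof
    assume "p dvd b"
    with \<open>p dvd a\<close> have "p dvd gcd a b" by simp
    with p(2) have "p ^ 2 dvd a" by (subst h) (simp add: power2_eq_square mult_dvd_mono)
    with assms(3) p(1) show False by blast
  qed
  ultimately show thesis by (rule that[OF p(1)])
qed

lemma not_dvd_pderiv:
  fixes p :: "'a::{idom, semiring_char_0} poly"
  assumes "degree p > 0"
  shows "\<not> p dvd pderiv p"
proof
  assume "p dvd pderiv p"
  moreover have "pderiv p \<noteq> 0" using assms by (simp add: pderiv_eq_0_iff)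
  ultimately have "degree p \<le> degree (pderiv p)" by (rule dvd_imp_degree_le)
  with assms show False by (simp add: degree_pderiv)
qed

lemma prime_imp_degree_pos:
  fixes f :: "'a::field_gcd poly"
  assumes "prime f"
  shows "degree f > 0"
proof -
  have "f \<noteq> 0" "\<not> is_unit f" using assms by auto
  then show ?thesis using is_unit_iff_degree by auto
qed

lemma poly_taylor_quadratic:
  fixes f :: "'a::idom poly"
  obtains c where "poly f (x + h) = poly f x + h * poly (pderiv f) x + h ^ 2 * c"
proof (induction f arbitrary: thesis)
  case 0
  show ?case by (rule 0[of 0]) simp
next
  case (pCons a f)
  obtain c where c: "poly f (x + h) = poly f x + h * poly (pderiv f) x + h ^ 2 * c"
    by (rule pCons.IH)
  show ?case
    by (rule pCons.prems[of "poly (pderiv f) x + x * c + h * c"])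
       (simp add: pderiv_pCons c[unfolded add.commute[of x h]] algebra_simps power2_eq_square)
qed

lemma dvd_poly_diff:
  fixes f :: "'a::idom poly"
  shows "(x - y) dvd poly f x - poly f y"
proof -
  obtain c where "poly f (y + (x - y)) = poly f y + (x - y) * poly (pderiv f) y + (x - y) ^ 2 * c"
    by (rule poly_taylor_quadratic)
  then show ?thesis by (simp add: power2_eq_square)
qed

lemma finite_poly_preimage:
  fixes f :: "'a::idom poly"
  assumes "degree f > 0"
  shows "finite {x. poly f x = v}"
proof -
  from assms have "f - [:v:] \<noteq> 0" by auto
  then show ?thesis using poly_roots_finite[of "f - [:v:]"] by simp
qed

text \<open>If \<open>f 0 = a \<noteq> 0\<close>, the values
  \<open>f (a M x) = a (1 + M x t)\<close> have cofactors coprime to \<open>M\<close>, and for suitable \<open>x\<close> that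
  cofactor is not a unit.\<close>

lemma prime_dvd_poly_value_not_dvd:
  fixes f :: "int poly" and M :: int
  assumes deg: "degree f > 0" and M: "M \<noteq> 0"
  obtains p n where "prime p" "\<not> p dvd M" "p dvd poly f n"
proof (cases "poly f 0 = 0")
  case True
  obtain q :: nat where q: "prime q" "q > nat \<bar>M\<bar>" using bigger_prime by blast
  have "\<not> int q dvd M"
  proof
    assume "int q dvd M"
    with M have "\<bar>int q\<bar> \<le> \<bar>M\<bar>" by (rule dvd_imp_le_int)
    with q(2) show False by simp
  qed
  moreover have "int q dvd poly f (int q)"
    using dvd_poly_diff[of "int q" 0 f] True by simp
  ultimately show thesis using q(1) that[of "int q" "int q"] by simp
next
  case False
  define a where "a = poly f 0"
  have a: "a \<noteq> 0" using False by (simp add: a_def)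
  let ?R = "{x. poly f x = a} \<union> {x. poly f x = - a} \<union> {x. poly f x = 0}"
  have "finite ?R" using finite_poly_preimage[OF deg] by blast
  moreover have "inj (\<lambda>x. a * M * x)" using a M by (auto simp: inj_on_def)
  then have "infinite (range (\<lambda>x. a * M * x))"
    using finite_imageD[of "\<lambda>x. a * M * x" UNIV] by auto
  ultimately have "\<not> range (\<lambda>x. a * M * x) \<subseteq> ?R" using finite_subset by blast
  then obtain x where x: "poly f (a * M * x) \<notin> {a, - a, 0}" by auto
  have "a * M * x dvd poly f (a * M * x) - a"
    using dvd_poly_diff[of "a * M * x" 0 f] by (simp add: a_def)
  then obtain t where t: "poly f (a * M * x) - a = a * M * x * t" by (elim dvdE)
  define w where "w = 1 + M * (x * t)"
  then have val: "poly f (a * M * x) = a * w" using t by (simp add: algebra_simps)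
  with x have "w \<noteq> 0" "w \<noteq> 1" "w \<noteq> -1" by auto
  then have "w \<noteq> 0" "\<not> is_unit w" by (auto simp: zdvd1_eq)
  then obtain p where p: "prime p" "p dvd w" using prime_divisor_exists by blast
  have "\<not> p dvd M"
  proof
    assume "p dvd M"
    then have "p dvd w - M * (x * t)" using p(2) by simp
    then have "is_unit p" by (simp add: w_def)
    with p(1) show False by (simp add: not_prime_unit)
  qed
  moreover have "p dvd poly f (a * M * x)" using val p(2) by simp
  ultimately show thesis by (rule that[OF p(1)])
qed

lemma exact_prime_dvd_poly_value_of_simple_root:
  fixes f :: "int poly"
  assumes p: "prime p" and root: "p dvd poly f n" and simple: "\<not> p dvd poly (pderiv f) n"
  obtains m where "p dvd poly f m" "\<not> p ^ 2 dvd poly f m"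
proof (cases "p ^ 2 dvd poly f n")
  case False
  with root show thesis by (rule that)
next
  case True
  obtain c where c: "poly f (n + p) = poly f n + p * poly (pderiv f) n + p ^ 2 * c"
    by (rule poly_taylor_quadratic)
  have "p dvd poly f (n + p)" using c root by (simp add: power2_eq_square)
  moreover have "\<not> p ^ 2 dvd poly f (n + p)"
  proof
    assume "p ^ 2 dvd poly f (n + p)"
    with True have "p ^ 2 dvd poly f (n + p) - poly f n - p ^ 2 * c" by simp
    then have "p * p dvd p * poly (pderiv f) n" using c by (simp add: power2_eq_square)
    with p simple show False by (simp add: prime_gt_0_int)
  qed
  ultimately show thesis by (rule that)
qed

lemma exact_prime_dvd_poly_value_periodic:
  fixes f :: "int poly"
  assumes "p dvd poly f n" "\<not> p ^ 2 dvd poly f n"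
  shows "p dvd poly f (n + p ^ 2 * k) \<and> \<not> p ^ 2 dvd poly f (n + p ^ 2 * k)"
proof -
  define d where "d = poly f (n + p ^ 2 * k) - poly f n"
  have d: "p ^ 2 dvd d"
    using dvd_poly_diff[of "n + p ^ 2 * k" n f] by (simp add: d_def dvd_mult_left)
  then have "p dvd d" by (simp add: power2_eq_square dvd_mult_left)
  with assms(1) have "p dvd poly f n + d" by simp
  moreover have "\<not> p ^ 2 dvd poly f n + d" using assms(2) d by (simp add: dvd_add_left_iff)
  ultimately show ?thesis by (simp add: d_def)
qed

lemma exact_prime_dvd_factor:
  fixes p K a b c :: int
  assumes p: "prime p" and eq: "K * a = b * c" and "\<not> p dvd K" "\<not> p dvd c"
    and "p dvd b" "\<not> p ^ 2 dvd b"
  shows "p dvd a \<and> \<not> p ^ 2 dvd a"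
proof
  have "p dvd K * a" using eq \<open>p dvd b\<close> by simp
  with p \<open>\<not> p dvd K\<close> show "p dvd a" by (simp add: prime_dvd_mult_iff)
next
  show "\<not> p ^ 2 dvd a"
  proof
    assume "p ^ 2 dvd a"
    then have "p ^ 2 dvd b * c" by (metis eq dvd_mult)
    moreover have "coprime (p ^ 2) c" using p \<open>\<not> p dvd c\<close> by (simp add: prime_imp_coprime)
    ultimately have "p ^ 2 dvd b" by (simp add: coprime_dvd_mult_left_iff)
    with \<open>\<not> p ^ 2 dvd b\<close> show False by simp
  qed
qed

lemma squarefree_part_unique:
  fixes m s k :: int
  assumes m: "m \<noteq> 0" and s: "squarefree s" and e: "m = s * k ^ 2"
  shows "s = squarefree_part m"
proof -
  have s0: "s \<noteq> 0" and k0: "k \<noteq> 0" using m e by auto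
  have "multiplicity p s = multiplicity p (squarefree_part m)" if p: "prime p" for p
  proof -
    have "multiplicity p m = multiplicity p s + 2 * multiplicity p k"
      using e s0 k0 p prime_elem_multiplicity_mult_distrib[of p s "k ^ 2"]
        prime_elem_multiplicity_power_distrib[of p k 2] prime_ge_0_int[of p] by simp
    moreover have "multiplicity p s \<le> 1" using s s0 p squarefree_factorial_semiring'' by blast
    ultimately have "multiplicity p s = multiplicity p m mod 2" by presburger
    with p show ?thesis by (simp add: prime_multiplicity_squarefree_part)
  qed
  then have "normalize s = normalize (squarefree_part m)"
    by (intro multiplicity_eq_imp_eq) (simp_all add: s0)
  moreover have "sgn s = sgn (squarefree_part m)"
  proof -
    have sgn_square: "sgn x ^ 2 = 1" if "x \<noteq> 0" for x :: int
      using that by (simp add: sgn_if)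
    have "sgn m = sgn s" using e k0 by (simp add: sgn_mult sgn_square)
    moreover have "sgn (squarefree_part m * square_part m ^ 2) = sgn (squarefree_part m)"
      using m by (simp add: sgn_mult sgn_square)
    then have "sgn m = sgn (squarefree_part m)" by (simp flip: squarefree_decompose)
    ultimately show ?thesis by simp
  qed
  ultimately show ?thesis by (metis abs_mult_sgn normalize_int_def)
qed

lemma sqf_part_eq_squarefree_part:
  assumes "m \<noteq> 0"
  shows "sqf_part m = squarefree_part m"
  unfolding sqf_part_def
proof (rule the_equality)
  show "squarefree (squarefree_part m) \<and> (\<exists>k. m = squarefree_part m * k ^ 2)"
    using squarefree_decompose[of m] by auto
next
  fix s assume "squarefree s \<and> (\<exists>k. m = s * k ^ 2)"
  then show "s = squarefree_part m" using squarefree_part_unique[OF assms] by blast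
qed

lemma prime_dvd_sqf_part:
  fixes p m :: int
  assumes p: "prime p" and "p dvd m" "\<not> p ^ 2 dvd m"
  shows "p dvd sqf_part m"
proof -
  have m: "m \<noteq> 0" using assms(3) by auto
  have "\<not> p dvd square_part m"
    using assms(3) by (simp add: dvd_square_part_iff)
  moreover have "p dvd squarefree_part m * square_part m ^ 2"
    using assms(2) by (simp flip: squarefree_decompose)
  ultimately show ?thesis
    using p by (simp add: sqf_part_eq_squarefree_part[OF m] prime_dvd_mult_iff prime_dvd_power_iff)
qed

lemma exact_prime_dvd_poly_value:
  fixes f :: "int poly" and M :: int
  assumes deg: "degree f > 0" and sep: "coprime (rat_poly f) (pderiv (rat_poly f))"
    and M: "M \<noteq> 0"
  obtains p n where "prime p" "\<not> p dvd M" "p dvd poly f n" "\<not> p ^ 2 dvd poly f n"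
proof -
  from sep have "coprime (rat_poly f) (rat_poly (pderiv f))"
    by (simp add: map_poly_of_int_pderiv)
  then obtain N where N: "N \<noteq> 0" "\<And>m n. m dvd poly f n \<Longrightarrow> m dvd poly (pderiv f) n \<Longrightarrow> m dvd N"
    by (rule coprime_rat_poly_values) blast
  from M N(1) have "M * N \<noteq> 0" by simp
  with deg obtain p n where p: "prime p" "\<not> p dvd M * N" "p dvd poly f n"
    by (rule prime_dvd_poly_value_not_dvd)
  have "\<not> p dvd poly (pderiv f) n" using N(2) p by (meson dvd_mult)
  with p obtain m where "p dvd poly f m" "\<not> p ^ 2 dvd poly f m"
    by (elim exact_prime_dvd_poly_value_of_simple_root)
  moreover have "\<not> p dvd M" using p(2) by (meson dvd_mult2)
  ultimately show thesis using p(1) that by blast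
qed

lemma infinite_sqf_part_not_dvd:
  fixes F D :: "int poly" and f :: "rat poly"
  assumes f: "prime f" "f dvd rat_poly F" "\<not> f ^ 2 dvd rat_poly F" "\<not> f dvd rat_poly D"
  shows "infinite {n. poly F n \<noteq> 0 \<and> \<not> sqf_part (poly F n) dvd poly D n}"
proof -
  obtain G where G: "rat_poly F = f * G" using f(2) by (elim dvdE)
  have "\<not> f dvd G" using f(3) G by (auto simp: power2_eq_square)
  obtain c fZ where c: "c > 0" "rat_poly fZ = smult (of_int c) f"
    by (rule rat_poly_clear_denominators)
  obtain b GZ where b: "b > 0" "rat_poly GZ = smult (of_int b) G"
    by (rule rat_poly_clear_denominators)
  have "rat_poly (fZ * GZ) = rat_poly (smult (c * b) F)"
    by (simp add: map_poly_of_int_mult map_poly_of_int_smult c(2) b(2) G mult_ac)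
  then have factor: "fZ * GZ = smult (c * b) F" by (simp only: map_poly_of_int_eq_iff)
  have coprime_fZ: "coprime (rat_poly fZ) g" if "coprime f g" for g
    using that c by (simp add: coprime_smult_left_iff)
  have "coprime (rat_poly fZ) (rat_poly GZ)"
    using coprime_fZ prime_imp_coprime[OF f(1) \<open>\<not> f dvd G\<close>] b
    by (simp add: coprime_smult_right_iff)
  then obtain N1 where N1: "N1 \<noteq> 0" "\<And>m n. m dvd poly fZ n \<Longrightarrow> m dvd poly GZ n \<Longrightarrow> m dvd N1"
    by (rule coprime_rat_poly_values) blast
  have "coprime (rat_poly fZ) (rat_poly D)"
    using coprime_fZ prime_imp_coprime[OF f(1) f(4)] by blast
  then obtain N2 where N2: "N2 \<noteq> 0" "\<And>m n. m dvd poly fZ n \<Longrightarrow> m dvd poly D n \<Longrightarrow> m dvd N2"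
    by (rule coprime_rat_poly_values) blast
  have "degree fZ = degree f"
    using c degree_map_poly_of_int[of fZ, where 'a = rat] by simp
  then have deg: "degree fZ > 0" using prime_imp_degree_pos[OF f(1)] by simp
  have "coprime f (pderiv f)"
    using f(1) prime_imp_degree_pos[OF f(1)] by (simp add: prime_imp_coprime not_dvd_pderiv)
  then have "coprime (rat_poly fZ) (pderiv (rat_poly fZ))"
    using c by (simp add: pderiv_smult coprime_smult_left_iff coprime_smult_right_iff)
  moreover have "c * b * N1 * N2 \<noteq> 0" using b c N1 N2 by simp
  ultimately obtain p n0 where p: "prime p" "\<not> p dvd c * b * N1 * N2"
    and n0: "p dvd poly fZ n0" "\<not> p ^ 2 dvd poly fZ n0"
    using deg by (elim exact_prime_dvd_poly_value)
  have pN: "\<not> p dvd c * b" "\<not> p dvd N1" "\<not> p dvd N2"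
    using p(2) by (meson dvd_mult dvd_mult2)+
  have bad: "n0 + p ^ 2 * k \<in> {n. poly F n \<noteq> 0 \<and> \<not> sqf_part (poly F n) dvd poly D n}" for k
  proof -
    define n where "n = n0 + p ^ 2 * k"
    have fZ: "p dvd poly fZ n" "\<not> p ^ 2 dvd poly fZ n"
      using exact_prime_dvd_poly_value_periodic[OF n0] by (simp_all add: n_def)
    have "\<not> p dvd poly GZ n" using N1(2)[OF fZ(1)] pN(2) by blast
    moreover have "(c * b) * poly F n = poly fZ n * poly GZ n"
      using arg_cong[OF factor, of "\<lambda>q. poly q n"] by simp
    ultimately have F: "p dvd poly F n" "\<not> p ^ 2 dvd poly F n"
      using exact_prime_dvd_factor[OF p(1) _ pN(1)] fZ by blast+
    have "\<not> p dvd poly D n" using N2(2)[OF fZ(1)] pN(3) by blast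
    moreover have "p dvd sqf_part (poly F n)" using prime_dvd_sqf_part[OF p(1) F] .
    ultimately have "\<not> sqf_part (poly F n) dvd poly D n" by (meson dvd_trans)
    moreover have "poly F n \<noteq> 0" using F(2) by auto
    ultimately show ?thesis by (simp add: n_def)
  qed
  have "inj (\<lambda>k. n0 + p ^ 2 * k)" using p(1) by (auto simp: inj_on_def)
  then have "infinite (range (\<lambda>k. n0 + p ^ 2 * k))"
    using finite_imageD[of "\<lambda>k. n0 + p ^ 2 * k" UNIV] by auto
  moreover have "range (\<lambda>k. n0 + p ^ 2 * k)
      \<subseteq> {n. poly F n \<noteq> 0 \<and> \<not> sqf_part (poly F n) dvd poly D n}"
    using bad by blast
  ultimately show ?thesis using finite_subset by blast
qed

theorem lemma5p3:
  fixes F D :: "int poly"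
  assumes "sqfree_int_poly F"
    and "finite {n::int. poly F n \<noteq> 0 \<and> \<not> (sqf_part (poly F n) dvd poly D n)}"
  shows "(map_poly of_int F :: rat poly) dvd map_poly of_int D"
proof (rule ccontr)
  assume not_dvd: "\<not> rat_poly F dvd rat_poly D"
  have no_square: "\<not> f ^ 2 dvd rat_poly F" if "prime f" for f
    using sqfree_int_poly_no_square_factor[OF assms(1) prime_imp_degree_pos[OF that]] .
  have "rat_poly F \<noteq> 0"
    using sqfree_int_poly_no_square_factor[OF assms(1), of "[:0, 1:]"] by auto
  then obtain f where "prime f" "f dvd rat_poly F" "\<not> f dvd rat_poly D"
    using not_dvd no_square by (rule prime_factor_not_dvd)
  then have "infinite {n. poly F n \<noteq> 0 \<and> \<not> sqf_part (poly F n) dvd poly D n}"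
    using no_square by (intro infinite_sqf_part_not_dvd) auto
  with assms(2) show False by simp
qed

end
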